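(* Let $\mathcal{R}=(G_0,e\to R)$ be an expanding replacement system with finite branching whose replacement graph $R$ is connected. Then there exists $i\in\mathbb{N}$ such that for every graph $G\in\Gamma(\mathcal{R})$, each collapsible subgraph of $G$ has an edge in common with at most $i$ other collapsible subgraphs of $G$.
   Context: A graph is a finite directed multigraph (loops, multiple edges allowed); isomorphisms preserve directions. A replacement system $\mathcal{R}=(G_0,e\to R)$: $G_0$ a graph, $e$ a non-loop edge from $v$ to $w$, $R$ a graph containing $v,w$ (initial and terminal vertices; others interior). Replacing an edge $\varepsilon$ of a graph means deleting it and gluing in a copy of $R$ identifying initial/terminal vertices with those of $\varepsilon$. An expansion of a graph is obtained by finitely many replacements; the full expansion sequence $G_n$ replaces all edges of $G_{n-1}$. $\mathcal{R}$ is expanding if $G_0,R$ have no isolated vertices, the initial and terminal vertices of $R$ are not adjacent, and $R$ has $\ge3$ vertices and $\ge2$ edges. $\mathcal{R}$ has finite branching if there is a uniform bound on the degrees of vertices of all $G_n$. The graph family $\Gamma(\mathcal{R})$ is the set of finite directed graphs $G$ having some expansion isomorphic to some expansion of $G_0$. Let $R_{\mathrm{loop}}$ be $R$ with initial and terminal vertices identified. A characteristic map for $R$ in $G$ is an isomorphism $\chi\colon R\to S$ or $\chi\colon R_{\mathrm{loop}}\to S$ onto a subgraph $S$ of $G$ such that for every interior vertex $u$ of $R$, every edge of $G$ incident on $\chi(u)$ lies in $S$; a collapsible subgraph of $G$ is the image of a characteristic map. *)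

theory Defs
  imports Main
begin

text \<open>Vertices and edges are natural numbers
  (every finite graph is isomorphic to such a graph, and all notions below are
  invariant under isomorphism).\<close>

record graph =
  verts :: "nat set"
  edges :: "nat set"
  src :: "nat \<Rightarrow> nat"
  tgt :: "nat \<Rightarrow> nat"

definition wf_graph :: "graph \<Rightarrow> bool" where
  "wf_graph G \<longleftrightarrow> finite (verts G) \<and> finite (edges G) \<and>
     (\<forall>e\<in>edges G. src G e \<in> verts G \<and> tgt G e \<in> verts G)"

definition graph_iso :: "graph \<Rightarrow> graph \<Rightarrow> bool" where
  "graph_iso G H \<longleftrightarrow> (\<exists>f g. bij_betw f (verts G) (verts H) \<and> bij_betw g (edges G) (edges H) \<and>
     (\<forall>e\<in>edges G. src H (g e) = f (src G e) \<and> tgt H (g e) = f (tgt G e)))"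

definition interior :: "graph \<Rightarrow> nat \<Rightarrow> nat \<Rightarrow> nat set" where
  "interior R v w = verts R - {v, w}"

text \<open>\<open>replace_step R v w G G'\<close>: G' is (up to isomorphism) obtained from G by
  replacing one edge \<open>\<epsilon>\<close> of G: delete \<open>\<epsilon>\<close> and glue in a copy of R, identifying
  v with the initial vertex and w with the terminal vertex of \<open>\<epsilon>\<close>.
  \<open>\<gamma>\<close>, \<open>\<delta>\<close> embed the old vertices/remaining edges, \<open>\<alpha>\<close>, \<open>\<beta>\<close> embed the copy of R.\<close>
definition replace_step :: "graph \<Rightarrow> nat \<Rightarrow> nat \<Rightarrow> graph \<Rightarrow> graph \<Rightarrow> bool" where
  "replace_step R v w G G' \<longleftrightarrow> wf_graph G' \<and>
    (\<exists>\<epsilon>\<in>edges G. \<exists>\<gamma> \<delta> \<alpha> \<beta>.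
       inj_on \<gamma> (verts G) \<and> inj_on \<alpha> (interior R v w) \<and>
       \<gamma> ` verts G \<inter> \<alpha> ` interior R v w = {} \<and>
       verts G' = \<gamma> ` verts G \<union> \<alpha> ` interior R v w \<and>
       \<alpha> v = \<gamma> (src G \<epsilon>) \<and> \<alpha> w = \<gamma> (tgt G \<epsilon>) \<and>
       inj_on \<delta> (edges G - {\<epsilon>}) \<and> inj_on \<beta> (edges R) \<and>
       \<delta> ` (edges G - {\<epsilon>}) \<inter> \<beta> ` edges R = {} \<and>
       edges G' = \<delta> ` (edges G - {\<epsilon>}) \<union> \<beta> ` edges R \<and>
       (\<forall>e\<in>edges G - {\<epsilon>}. src G' (\<delta> e) = \<gamma> (src G e) \<and> tgt G' (\<delta> e) = \<gamma> (tgt G e)) \<and>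
       (\<forall>e\<in>edges R. src G' (\<beta> e) = \<alpha> (src R e) \<and> tgt G' (\<beta> e) = \<alpha> (tgt R e)))"

definition expansion :: "graph \<Rightarrow> nat \<Rightarrow> nat \<Rightarrow> graph \<Rightarrow> graph \<Rightarrow> bool" where
  "expansion R v w G H \<longleftrightarrow> (replace_step R v w)\<^sup>*\<^sup>* G H"

text \<open>\<open>full_step R v w G G'\<close>: G' is (up to isomorphism) obtained from G by
  replacing every edge of G (simultaneously) by a copy of R.\<close>
definition full_step :: "graph \<Rightarrow> nat \<Rightarrow> nat \<Rightarrow> graph \<Rightarrow> graph \<Rightarrow> bool" where
  "full_step R v w G G' \<longleftrightarrow> wf_graph G' \<and>
    (\<exists>\<gamma> (\<alpha>::nat \<Rightarrow> nat \<Rightarrow> nat) (\<beta>::nat \<Rightarrow> nat \<Rightarrow> nat).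
       inj_on \<gamma> (verts G) \<and>
       inj_on (\<lambda>(\<epsilon>, u). \<alpha> \<epsilon> u) (edges G \<times> interior R v w) \<and>
       \<gamma> ` verts G \<inter> (\<lambda>(\<epsilon>, u). \<alpha> \<epsilon> u) ` (edges G \<times> interior R v w) = {} \<and>
       verts G' = \<gamma> ` verts G \<union> (\<lambda>(\<epsilon>, u). \<alpha> \<epsilon> u) ` (edges G \<times> interior R v w) \<and>
       (\<forall>\<epsilon>\<in>edges G. \<alpha> \<epsilon> v = \<gamma> (src G \<epsilon>) \<and> \<alpha> \<epsilon> w = \<gamma> (tgt G \<epsilon>)) \<and>
       inj_on (\<lambda>(\<epsilon>, f). \<beta> \<epsilon> f) (edges G \<times> edges R) \<and>
       edges G' = (\<lambda>(\<epsilon>, f). \<beta> \<epsilon> f) ` (edges G \<times> edges R) \<and>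
       (\<forall>\<epsilon>\<in>edges G. \<forall>f\<in>edges R.
          src G' (\<beta> \<epsilon> f) = \<alpha> \<epsilon> (src R f) \<and> tgt G' (\<beta> \<epsilon> f) = \<alpha> \<epsilon> (tgt R f)))"

text \<open>Degree of a vertex in a directed multigraph (a loop counts twice).\<close>
definition degree :: "graph \<Rightarrow> nat \<Rightarrow> nat" where
  "degree G x = card {e \<in> edges G. src G e = x} + card {e \<in> edges G. tgt G e = x}"

text \<open>Replacement system \<open>(G0, e \<rightarrow> R)\<close> where e is a non-loop edge from v to w,
  and v, w are vertices of R.\<close>
definition replacement_system :: "graph \<Rightarrow> graph \<Rightarrow> nat \<Rightarrow> nat \<Rightarrow> bool" where
  "replacement_system G0 R v w \<longleftrightarrow> wf_graph G0 \<and> wf_graph R \<and>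
     v \<in> verts R \<and> w \<in> verts R \<and> v \<noteq> w"

definition no_isolated :: "graph \<Rightarrow> bool" where
  "no_isolated G \<longleftrightarrow> (\<forall>x\<in>verts G. \<exists>e\<in>edges G. src G e = x \<or> tgt G e = x)"

definition expanding :: "graph \<Rightarrow> graph \<Rightarrow> nat \<Rightarrow> nat \<Rightarrow> bool" where
  "expanding G0 R v w \<longleftrightarrow> no_isolated G0 \<and> no_isolated R \<and>
     \<not> (\<exists>e\<in>edges R. (src R e = v \<and> tgt R e = w) \<or> (src R e = w \<and> tgt R e = v)) \<and>
     card (verts R) \<ge> 3 \<and> card (edges R) \<ge> 2"

text \<open>Finite branching: uniform bound on vertex degrees in all graphs \<open>G_n\<close> of the
  full expansion sequence (each \<open>G_n\<close> is determined up to isomorphism).\<close>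
definition finite_branching :: "graph \<Rightarrow> graph \<Rightarrow> nat \<Rightarrow> nat \<Rightarrow> bool" where
  "finite_branching G0 R v w \<longleftrightarrow>
     (\<exists>B. \<forall>H. (full_step R v w)\<^sup>*\<^sup>* G0 H \<longrightarrow> (\<forall>x\<in>verts H. degree H x \<le> B))"

definition connected_graph :: "graph \<Rightarrow> bool" where
  "connected_graph G \<longleftrightarrow>
     (\<forall>x\<in>verts G. \<forall>y\<in>verts G.
        (\<lambda>a b. \<exists>e\<in>edges G. (src G e = a \<and> tgt G e = b) \<or> (src G e = b \<and> tgt G e = a))\<^sup>*\<^sup>* x y)"

definition graph_family :: "graph \<Rightarrow> graph \<Rightarrow> nat \<Rightarrow> nat \<Rightarrow> graph set" where
  "graph_family G0 R v w = {G. wf_graph G \<and>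
     (\<exists>H H'. expansion R v w G H \<and> expansion R v w G0 H' \<and> graph_iso H H')}"

text \<open>Characteristic map \<open>(f, g)\<close> (vertex map, edge map) for R in G: an
  isomorphism from R, or from \<open>R_loop\<close> (v and w identified, i.e. \<open>f v = f w\<close>),
  onto the subgraph \<open>S = (f ` verts R, g ` edges R)\<close> of G, such that every edge
  of G incident on the image of an interior vertex lies in S.\<close>
definition char_map :: "graph \<Rightarrow> nat \<Rightarrow> nat \<Rightarrow> graph \<Rightarrow> (nat \<Rightarrow> nat) \<Rightarrow> (nat \<Rightarrow> nat) \<Rightarrow> bool" where
  "char_map R v w G f g \<longleftrightarrow>
     f ` verts R \<subseteq> verts G \<and> g ` edges R \<subseteq> edges G \<and> inj_on g (edges R) \<and>
     (inj_on f (verts R) \<or> (f v = f w \<and> inj_on f (verts R - {w}))) \<and>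
     (\<forall>e\<in>edges R. src G (g e) = f (src R e) \<and> tgt G (g e) = f (tgt R e)) \<and>
     (\<forall>u\<in>interior R v w. \<forall>e\<in>edges G. (src G e = f u \<or> tgt G e = f u) \<longrightarrow> e \<in> g ` edges R)"

text \<open>Collapsible subgraph, represented by its (vertex set, edge set); its
  incidence is inherited from G.\<close>
definition collapsible :: "graph \<Rightarrow> nat \<Rightarrow> nat \<Rightarrow> graph \<Rightarrow> nat set \<times> nat set \<Rightarrow> bool" where
  "collapsible R v w G S \<longleftrightarrow> (\<exists>f g. char_map R v w G f g \<and> S = (f ` verts R, g ` edges R))"

end

theory Submission
  imports Defs "HOL-Library.Nat_Bijection" "HOL-Library.FuncSet"
begin

text \<open>Under full expansion, the out- and in-degree of an endpoint of an edge evolve by a fixed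
  nonnegative 2\<times>2 integer matrix; finite branching bounds its powers, which forces a positive
  fixed vector \<open>(wA, wB)\<close>. Weighting outgoing edge-ends by \<open>wA\<close> and incoming ones by \<open>wB\<close>,
  a single replacement keeps the weighted degree of every old vertex and gives each new vertex the
  weighted degree of the corresponding interior vertex of R. Hence all expansions of \<open>G0\<close>, and
  through a common expansion all graphs of \<open>\<Gamma>(\<R>)\<close>, have degrees bounded by some K. As R is
  connected, a collapsible subgraph sharing an edge with a given one lies within a bounded
  distance of it, and in a graph of degree at most K there are boundedly many such subgraphs.\<close>

section \<open>Balanced weights from finite branching\<close>

definition out_degree :: "graph \<Rightarrow> nat \<Rightarrow> nat" where
  "out_degree G x = card {e \<in> edges G. src G e = x}"

definition in_degree :: "graph \<Rightarrow> nat \<Rightarrow> nat" where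
  "in_degree G x = card {e \<in> edges G. tgt G e = x}"

lemma degree_eq_out_in: "degree G x = out_degree G x + in_degree G x"
  by (simp add: degree_def out_degree_def in_degree_def)

lemma bounded_linear_recurrence_degenerate:
  fixes a b :: "nat \<Rightarrow> nat"
  assumes rec: "\<And>n. a (Suc n) = c * a n + d * b n"
    and pos: "\<And>n. a n \<ge> 1" "\<And>n. b n \<ge> 1" and bounded: "\<And>n. a n \<le> B"
  shows "(c = 1 \<and> d = 0) \<or> c = 0"
proof (rule ccontr)
  assume "\<not> ?thesis"
  then have "c \<ge> 2 \<or> (c \<ge> 1 \<and> d \<ge> 1)" by auto
  then have "a n < a (Suc n)" for n
  proof
    assume "c \<ge> 2"
    then have "2 * a n \<le> c * a n" by simp
    then show ?thesis using rec[of n] pos(1)[of n] by linarith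
  next
    assume "c \<ge> 1 \<and> d \<ge> 1"
    then have "a n \<le> c * a n" "1 \<le> d * b n" using pos(2)[of n] by (simp_all add: Suc_le_eq)
    then show ?thesis using rec[of n] by linarith
  qed
  then have "n \<le> a n" for n by (simp add: strict_mono_Suc_iff strict_mono_imp_increasing)
  then show False using bounded[of "Suc B"] by (meson not_less_eq_eq le_trans)
qed

lemma bounded_linear_recurrence_fixed_point:
  fixes a b :: "nat \<Rightarrow> nat"
  assumes a0: "a 0 = 1" and b0: "b 0 = 1"
    and rec_a: "\<And>n. a (Suc n) = ov * a n + iv * b n"
    and rec_b: "\<And>n. b (Suc n) = ow * a n + iw * b n"
    and nz: "ov + iv \<ge> 1" "ow + iw \<ge> 1"
    and bounded: "\<And>n. a n \<le> B" "\<And>n. b n \<le> B"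
  shows "\<exists>wA wB::nat. wA \<ge> 1 \<and> wB \<ge> 1 \<and> wA = ov * wA + iv * wB \<and> wB = ow * wA + iw * wB"
proof -
  have pos: "a n \<ge> 1 \<and> b n \<ge> 1" for n
  proof (induction n)
    case (Suc n)
    then have "ov + iv \<le> a (Suc n)" "ow + iw \<le> b (Suc n)"
      unfolding rec_a rec_b by (simp_all add: add_mono)
    with nz show ?case by simp
  qed (simp add: a0 b0)
  have A: "(ov = 1 \<and> iv = 0) \<or> ov = 0"
    using bounded_linear_recurrence_degenerate[of a ov iv b] rec_a pos bounded by blast
  have B: "(iw = 1 \<and> ow = 0) \<or> iw = 0"
    using bounded_linear_recurrence_degenerate[of b iw ow a B] rec_b pos bounded
    by (simp add: add.commute)
  consider "ov = 1" "iv = 0" "iw = 1" "ow = 0" | "ov = 1" "iv = 0" "iw = 0" | "ov = 0" "iw = 1" "ow = 0"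
    | "ov = 0" "iw = 0" using A B by blast
  then show ?thesis
  proof cases
    case 1
    then show ?thesis by (intro exI[of _ 1]) simp
  next
    case 2
    then show ?thesis using nz by (intro exI[of _ 1] exI[of _ ow]) simp
  next
    case 3
    then show ?thesis using nz by (intro exI[of _ iv] exI[of _ 1]) simp
  next
    case 4
    have "a (2 * Suc n) = (iv * ow) * a (2 * n) + 0 * b n" for n
      using rec_a rec_b 4 by simp
    then have "iv * ow \<le> 1"
      using bounded_linear_recurrence_degenerate[of "\<lambda>n. a (2 * n)" "iv * ow" 0 b B] pos bounded
      by force
    with nz 4 have "iv = 1" "ow = 1" by (simp_all add: le_Suc_eq)
    with 4 show ?thesis by (intro exI[of _ 1]) simp
  qed
qed

definition full_expansion_vertex :: "graph \<Rightarrow> nat \<Rightarrow> nat \<Rightarrow> graph \<Rightarrow> nat \<Rightarrow> nat \<Rightarrow> nat" where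
  "full_expansion_vertex R v w G \<epsilon> u =
     (if u = v then 2 * src G \<epsilon> else if u = w then 2 * tgt G \<epsilon> else 2 * prod_encode (\<epsilon>, u) + 1)"

text \<open>A concrete full expansion: an old vertex x becomes 2x, the copy of an interior vertex u
  of R replacing \<open>\<epsilon>\<close> becomes \<open>2 \<langle>\<epsilon>, u\<rangle> + 1\<close>, and the copy of an edge f of R replacing \<open>\<epsilon>\<close>
  becomes \<open>\<langle>\<epsilon>, f\<rangle>\<close>.\<close>
definition full_expansion :: "graph \<Rightarrow> nat \<Rightarrow> nat \<Rightarrow> graph \<Rightarrow> graph" where
  "full_expansion R v w G =
     \<lparr> verts = (\<lambda>x. 2 * x) ` verts G \<union>
         (\<lambda>(\<epsilon>, u). 2 * prod_encode (\<epsilon>, u) + 1) ` (edges G \<times> interior R v w),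
       edges = (\<lambda>(\<epsilon>, f). prod_encode (\<epsilon>, f)) ` (edges G \<times> edges R),
       src = (\<lambda>e. full_expansion_vertex R v w G (fst (prod_decode e)) (src R (snd (prod_decode e)))),
       tgt = (\<lambda>e. full_expansion_vertex R v w G (fst (prod_decode e)) (tgt R (snd (prod_decode e)))) \<rparr>"

lemma even_neq_odd [simp]: "2 * (a::nat) \<noteq> Suc (2 * b)" "Suc (2 * b) \<noteq> 2 * (a::nat)"
  by presburger+

lemma wf_full_expansion:
  assumes "wf_graph G" "wf_graph R"
  shows "wf_graph (full_expansion R v w G)"
  using assms
  by (auto simp: wf_graph_def full_expansion_def full_expansion_vertex_def interior_def)

lemma full_step_full_expansion:
  assumes "wf_graph G" "wf_graph R" "v \<noteq> w"
  shows "full_step R v w G (full_expansion R v w G)"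
  unfolding full_step_def
  by (rule conjI[OF wf_full_expansion[OF assms(1,2)]], rule exI[of _ "\<lambda>x. 2 * x"],
      rule exI[of _ "full_expansion_vertex R v w G"], rule exI[of _ "\<lambda>\<epsilon> f. prod_encode (\<epsilon>, f)"])
    (use assms(3) in \<open>auto simp: inj_on_def full_expansion_def full_expansion_vertex_def
       interior_def prod_encode_eq image_iff split: if_splits\<close>)

lemma full_expansion_vertex_eq_old:
  "full_expansion_vertex R v w G \<epsilon> u = 2 * x \<longleftrightarrow>
     (u = v \<and> src G \<epsilon> = x) \<or> (u \<noteq> v \<and> u = w \<and> tgt G \<epsilon> = x)"
  by (auto simp: full_expansion_vertex_def)

lemma incident_full_expansion:
  assumes "v \<noteq> w" and h: "h \<in> {src, tgt}"
  shows "{e \<in> edges (full_expansion R v w G). h (full_expansion R v w G) e = 2 * x} =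
    (\<lambda>(\<epsilon>, f). prod_encode (\<epsilon>, f)) `
      ({e \<in> edges G. src G e = x} \<times> {f \<in> edges R. h R f = v} \<union>
       {e \<in> edges G. tgt G e = x} \<times> {f \<in> edges R. h R f = w})"
proof -
  have "h (full_expansion R v w G) (prod_encode (\<epsilon>, f)) = full_expansion_vertex R v w G \<epsilon> (h R f)"
    for \<epsilon> f using h by (auto simp: full_expansion_def)
  then have "{e \<in> edges (full_expansion R v w G). h (full_expansion R v w G) e = 2 * x} =
      (\<lambda>(\<epsilon>, f). prod_encode (\<epsilon>, f)) `
        {(\<epsilon>, f) \<in> edges G \<times> edges R. full_expansion_vertex R v w G \<epsilon> (h R f) = 2 * x}"
    by (auto simp: full_expansion_def)
  also have "{(\<epsilon>, f) \<in> edges G \<times> edges R. full_expansion_vertex R v w G \<epsilon> (h R f) = 2 * x} =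
      {e \<in> edges G. src G e = x} \<times> {f \<in> edges R. h R f = v} \<union>
      {e \<in> edges G. tgt G e = x} \<times> {f \<in> edges R. h R f = w}"
    using assms(1) unfolding full_expansion_vertex_eq_old by auto
  finally show ?thesis .
qed

lemma card_incident_full_expansion:
  assumes "wf_graph G" "wf_graph R" "v \<noteq> w" "h \<in> {src, tgt}"
  shows "card {e \<in> edges (full_expansion R v w G). h (full_expansion R v w G) e = 2 * x} =
    out_degree G x * card {f \<in> edges R. h R f = v} + in_degree G x * card {f \<in> edges R. h R f = w}"
  unfolding incident_full_expansion[OF assms(3,4)] out_degree_def in_degree_def
  using assms(1-3)
  by (subst card_image, simp add: inj_on_def prod_encode_eq, subst card_Un_disjoint)
    (auto simp: wf_graph_def card_cartesian_product)

lemma degrees_full_expansion: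
  assumes "wf_graph G" "wf_graph R" "v \<noteq> w"
  shows "out_degree (full_expansion R v w G) (2 * x) =
           out_degree G x * out_degree R v + in_degree G x * out_degree R w"
    and "in_degree (full_expansion R v w G) (2 * x) =
           out_degree G x * in_degree R v + in_degree G x * in_degree R w"
  using card_incident_full_expansion[OF assms, of src x] card_incident_full_expansion[OF assms, of tgt x]
  by (simp_all add: out_degree_def in_degree_def)

text \<open>\<open>fst\<close> and \<open>snd\<close> of \<open>degree_growth R v w n\<close> are the degrees, after n full expansions,
  of a vertex that initially is the tail, respectively the head, of a single edge.\<close>
primrec degree_growth :: "graph \<Rightarrow> nat \<Rightarrow> nat \<Rightarrow> nat \<Rightarrow> nat \<times> nat" where
  "degree_growth R v w 0 = (1, 1)"
| "degree_growth R v w (Suc n) = (case degree_growth R v w n of (a, b) \<Rightarrow>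
     (out_degree R v * a + in_degree R v * b, out_degree R w * a + in_degree R w * b))"

lemma full_expansion_power_full_steps:
  assumes "wf_graph G" "wf_graph R" "v \<noteq> w"
  shows "(full_step R v w)\<^sup>*\<^sup>* G ((full_expansion R v w ^^ n) G)"
  using assms(1)
proof (induction n arbitrary: G)
  case (Suc n)
  then show ?case
    using full_step_full_expansion[OF Suc.prems assms(2,3)] Suc.IH[OF wf_full_expansion[OF Suc.prems assms(2)]]
    by (simp add: funpow_Suc_right converse_rtranclp_into_rtranclp del: funpow.simps)
qed simp

lemma full_expansion_power_vertex:
  "x \<in> verts G \<Longrightarrow> 2 ^ n * x \<in> verts ((full_expansion R v w ^^ n) G)"
  by (induction n) (auto simp: full_expansion_def mult.assoc)

lemma degree_full_expansion_power:
  assumes "wf_graph G" "wf_graph R" "v \<noteq> w"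
  shows "degree ((full_expansion R v w ^^ n) G) (2 ^ n * x) =
           out_degree G x * fst (degree_growth R v w n) + in_degree G x * snd (degree_growth R v w n)"
  using assms(1)
proof (induction n arbitrary: G x)
  case (Suc n)
  have "degree ((full_expansion R v w ^^ Suc n) G) (2 ^ Suc n * x) =
      degree ((full_expansion R v w ^^ n) (full_expansion R v w G)) (2 ^ n * (2 * x))"
    by (simp add: funpow_Suc_right mult.assoc mult.commute del: funpow.simps)
  then show ?case
    unfolding Suc.IH[OF wf_full_expansion[OF Suc.prems assms(2)]] degrees_full_expansion[OF Suc.prems assms(2,3)]
    by (simp add: split_beta algebra_simps)
qed (simp add: degree_eq_out_in)

text \<open>Weighting each outgoing edge-end by \<open>wA\<close> and each incoming one by \<open>wB\<close>, the weighted
  degrees of v and w in R are \<open>wA\<close> and \<open>wB\<close>: replacing an edge preserves weighted degrees.\<close>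
definition balanced_weights :: "graph \<Rightarrow> nat \<Rightarrow> nat \<Rightarrow> nat \<Rightarrow> nat \<Rightarrow> bool" where
  "balanced_weights R v w wA wB \<longleftrightarrow> wA \<ge> 1 \<and> wB \<ge> 1 \<and>
     wA = out_degree R v * wA + in_degree R v * wB \<and> wB = out_degree R w * wA + in_degree R w * wB"

lemma finite_branching_balanced_weights:
  assumes rs: "replacement_system G0 R v w" and ex: "expanding G0 R v w"
    and fb: "finite_branching G0 R v w" and ne: "edges G0 \<noteq> {}"
  shows "\<exists>wA wB. balanced_weights R v w wA wB"
proof -
  have wf0: "wf_graph G0" and wfR: "wf_graph R" and vR: "v \<in> verts R" and wR: "w \<in> verts R"
    and vw: "v \<noteq> w" using rs by (auto simp: replacement_system_def)
  obtain B where B: "\<And>H x. (full_step R v w)\<^sup>*\<^sup>* G0 H \<Longrightarrow> x \<in> verts H \<Longrightarrow> degree H x \<le> B"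
    using fb unfolding finite_branching_def by blast
  obtain \<epsilon> where \<epsilon>: "\<epsilon> \<in> edges G0" using ne by blast
  have ends: "src G0 \<epsilon> \<in> verts G0" "tgt G0 \<epsilon> \<in> verts G0" using wf0 \<epsilon> by (auto simp: wf_graph_def)
  have fin: "finite (edges G0)" "finite (edges R)" using wf0 wfR by (auto simp: wf_graph_def)
  have "out_degree G0 (src G0 \<epsilon>) \<ge> 1" "in_degree G0 (tgt G0 \<epsilon>) \<ge> 1"
    unfolding out_degree_def in_degree_def using fin \<epsilon>
    by (auto simp: Suc_le_eq card_gt_0_iff)
  then have "fst (degree_growth R v w n) \<le> B" "snd (degree_growth R v w n) \<le> B" for n
    using B[OF full_expansion_power_full_steps[OF wf0 wfR vw] full_expansion_power_vertex[OF ends(1)]]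
      B[OF full_expansion_power_full_steps[OF wf0 wfR vw] full_expansion_power_vertex[OF ends(2)]]
    unfolding degree_full_expansion_power[OF wf0 wfR vw]
    by (metis (no_types, lifting) le_add1 le_add2 le_trans mult_le_mono1 mult_1)+
  moreover have "out_degree R u + in_degree R u \<ge> 1" if "u \<in> verts R" for u
    using ex that fin(2) unfolding expanding_def no_isolated_def out_degree_def in_degree_def
    by (auto simp: Suc_le_eq card_gt_0_iff)
  ultimately show ?thesis
    unfolding balanced_weights_def
    by (intro bounded_linear_recurrence_fixed_point[where a="\<lambda>n. fst (degree_growth R v w n)"
        and b="\<lambda>n. snd (degree_growth R v w n)" and B=B]) (simp_all add: split_beta vR wR)
qed

section \<open>Replacement preserves weighted degrees\<close>

definition weighted_degree :: "nat \<Rightarrow> nat \<Rightarrow> graph \<Rightarrow> nat \<Rightarrow> nat" where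
  "weighted_degree wA wB G x = wA * out_degree G x + wB * in_degree G x"

lemma degree_le_weighted_degree:
  "balanced_weights R v w wA wB \<Longrightarrow> degree G x \<le> weighted_degree wA wB G x"
  unfolding balanced_weights_def weighted_degree_def degree_eq_out_in by (intro add_mono) auto

locale edge_replacement =
  fixes R :: graph and v w :: nat and G G' :: graph and \<epsilon> :: nat and \<gamma> \<delta> \<alpha> \<beta> :: "nat \<Rightarrow> nat"
  assumes wf_graph: "wf_graph G" and wf_replacement: "wf_graph R" and ends_distinct: "v \<noteq> w"
    and replaced_edge: "\<epsilon> \<in> edges G"
    and inj_old_verts: "inj_on \<gamma> (verts G)" and inj_new_verts: "inj_on \<alpha> (interior R v w)"
    and disjoint_verts: "\<gamma> ` verts G \<inter> \<alpha> ` interior R v w = {}"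
    and verts_eq: "verts G' = \<gamma> ` verts G \<union> \<alpha> ` interior R v w"
    and glue_initial: "\<alpha> v = \<gamma> (src G \<epsilon>)" and glue_terminal: "\<alpha> w = \<gamma> (tgt G \<epsilon>)"
    and inj_old_edges: "inj_on \<delta> (edges G - {\<epsilon>})" and inj_new_edges: "inj_on \<beta> (edges R)"
    and disjoint_edges: "\<delta> ` (edges G - {\<epsilon>}) \<inter> \<beta> ` edges R = {}"
    and edges_eq: "edges G' = \<delta> ` (edges G - {\<epsilon>}) \<union> \<beta> ` edges R"
    and old_ends: "\<forall>e\<in>edges G - {\<epsilon>}. src G' (\<delta> e) = \<gamma> (src G e) \<and> tgt G' (\<delta> e) = \<gamma> (tgt G e)"
    and new_ends: "\<forall>f\<in>edges R. src G' (\<beta> f) = \<alpha> (src R f) \<and> tgt G' (\<beta> f) = \<alpha> (tgt R f)"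

lemma replace_step_edge_replacement:
  assumes "replace_step R v w G G'" "wf_graph G" "wf_graph R" "v \<noteq> w"
  obtains \<epsilon> \<gamma> \<delta> \<alpha> \<beta> where "edge_replacement R v w G G' \<epsilon> \<gamma> \<delta> \<alpha> \<beta>"
  using assms(1) unfolding replace_step_def
  by (elim conjE bexE exE) (rule that, unfold_locales, (assumption | rule assms(2-4))+)

context edge_replacement
begin

lemma ends_in_verts:
  assumes "h \<in> {src, tgt}"
  shows "e \<in> edges G \<Longrightarrow> h G e \<in> verts G" and "f \<in> edges R \<Longrightarrow> h R f \<in> verts R"
  using assms wf_graph wf_replacement by (auto simp: wf_graph_def)

lemma glued_eq_old:
  assumes "u \<in> verts R" "x \<in> verts G"
  shows "\<alpha> u = \<gamma> x \<longleftrightarrow> (u = v \<and> src G \<epsilon> = x) \<or> (u = w \<and> tgt G \<epsilon> = x)"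
proof -
  have ends: "src G \<epsilon> \<in> verts G" "tgt G \<epsilon> \<in> verts G"
    using ends_in_verts(1)[OF _ replaced_edge] by auto
  show ?thesis
  proof (cases "u \<in> interior R v w")
    case True
    then show ?thesis using disjoint_verts assms(2) by (auto simp: interior_def)
  next
    case False
    then have "u = v \<or> u = w" using assms(1) by (auto simp: interior_def)
    then show ?thesis
      using inj_old_verts ends assms(2) ends_distinct glue_initial glue_terminal
      by (auto simp: inj_on_def)
  qed
qed

lemma glued_eq_new:
  assumes "u \<in> verts R" "u' \<in> interior R v w"
  shows "\<alpha> u = \<alpha> u' \<longleftrightarrow> u = u'"
proof (cases "u \<in> interior R v w")
  case True
  then show ?thesis using inj_new_verts assms(2) by (auto simp: inj_on_def)
next
  case False
  then have "\<alpha> u \<in> \<gamma> ` verts G"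
    using assms(1) ends_in_verts(1)[OF _ replaced_edge] glue_initial glue_terminal
    by (auto simp: interior_def)
  then show ?thesis using False assms(2) disjoint_verts by auto
qed

lemma card_incident_split:
  assumes h: "h \<in> {src, tgt}"
  shows "card {e \<in> edges G'. h G' e = y} =
    card {e \<in> edges G - {\<epsilon>}. \<gamma> (h G e) = y} + card {f \<in> edges R. \<alpha> (h R f) = y}"
proof -
  let ?A = "{e \<in> edges G - {\<epsilon>}. \<gamma> (h G e) = y}" and ?B = "{f \<in> edges R. \<alpha> (h R f) = y}"
  have fin: "finite (edges G)" "finite (edges R)"
    using wf_graph wf_replacement by (auto simp: wf_graph_def)
  have "{e \<in> edges G'. h G' e = y} = \<delta> ` ?A \<union> \<beta> ` ?B"
    using h old_ends new_ends unfolding edges_eq by auto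
  moreover have "card (\<delta> ` ?A \<union> \<beta> ` ?B) = card (\<delta> ` ?A) + card (\<beta> ` ?B)"
    by (rule card_Un_disjoint) (use fin disjoint_edges in auto)
  moreover have "card (\<delta> ` ?A) = card ?A" "card (\<beta> ` ?B) = card ?B"
    by (auto intro!: card_image inj_on_subset[OF inj_old_edges] inj_on_subset[OF inj_new_edges])
  ultimately show ?thesis by simp
qed

lemma card_incident_old:
  assumes h: "h \<in> {src, tgt}" and x: "x \<in> verts G"
  shows "card {e \<in> edges G'. h G' e = \<gamma> x} + of_bool (h G \<epsilon> = x) =
    card {e \<in> edges G. h G e = x} + of_bool (src G \<epsilon> = x) * card {f \<in> edges R. h R f = v}
      + of_bool (tgt G \<epsilon> = x) * card {f \<in> edges R. h R f = w}"
proof -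
  have fin: "finite (edges G)" "finite (edges R)"
    using wf_graph wf_replacement by (auto simp: wf_graph_def)
  have "{e \<in> edges G - {\<epsilon>}. \<gamma> (h G e) = \<gamma> x} = {e \<in> edges G. h G e = x} - {\<epsilon>}"
    using inj_old_verts x ends_in_verts(1)[OF h] by (auto simp: inj_on_def)
  moreover have "card ({e \<in> edges G. h G e = x} - {\<epsilon>}) + of_bool (h G \<epsilon> = x) =
      card {e \<in> edges G. h G e = x}"
    using card_Suc_Diff1[of "{e \<in> edges G. h G e = x}" \<epsilon>] fin(1) replaced_edge by auto
  ultimately have old: "card {e \<in> edges G - {\<epsilon>}. \<gamma> (h G e) = \<gamma> x} + of_bool (h G \<epsilon> = x) =
      card {e \<in> edges G. h G e = x}"
    by simp
  have "{f \<in> edges R. \<alpha> (h R f) = \<gamma> x} =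
      (if src G \<epsilon> = x then {f \<in> edges R. h R f = v} else {}) \<union>
      (if tgt G \<epsilon> = x then {f \<in> edges R. h R f = w} else {})"
    using glued_eq_old[OF ends_in_verts(2)[OF h] x] by auto
  moreover have "card \<dots> = of_bool (src G \<epsilon> = x) * card {f \<in> edges R. h R f = v}
      + of_bool (tgt G \<epsilon> = x) * card {f \<in> edges R. h R f = w}"
    by (subst card_Un_disjoint) (use fin ends_distinct in auto)
  ultimately have new: "card {f \<in> edges R. \<alpha> (h R f) = \<gamma> x} =
      of_bool (src G \<epsilon> = x) * card {f \<in> edges R. h R f = v}
      + of_bool (tgt G \<epsilon> = x) * card {f \<in> edges R. h R f = w}"
    by simp
  show ?thesis using old new card_incident_split[OF h] by simp
qed

lemma card_incident_new:
  assumes h: "h \<in> {src, tgt}" and u: "u \<in> interior R v w"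
  shows "card {e \<in> edges G'. h G' e = \<alpha> u} = card {f \<in> edges R. h R f = u}"
proof -
  have old: "{e \<in> edges G - {\<epsilon>}. \<gamma> (h G e) = \<alpha> u} = {}"
    using ends_in_verts(1)[OF h] u disjoint_verts by auto
  have new: "{f \<in> edges R. \<alpha> (h R f) = \<alpha> u} = {f \<in> edges R. h R f = u}"
    using glued_eq_new[OF ends_in_verts(2)[OF h] u] by blast
  show ?thesis using card_incident_split[OF h, of "\<alpha> u"] unfolding old new by simp
qed

lemma weighted_degree_old:
  assumes bw: "balanced_weights R v w wA wB" and x: "x \<in> verts G"
  shows "weighted_degree wA wB G' (\<gamma> x) = weighted_degree wA wB G x"
proof -
  define s t :: nat where "s = of_bool (src G \<epsilon> = x)" and "t = of_bool (tgt G \<epsilon> = x)"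
  have out: "out_degree G' (\<gamma> x) + s = out_degree G x + s * out_degree R v + t * out_degree R w"
    using card_incident_old[OF _ x, of src] unfolding s_def t_def out_degree_def by simp
  have "in_degree G' (\<gamma> x) + t = in_degree G x + s * in_degree R v + t * in_degree R w"
    using card_incident_old[OF _ x, of tgt] unfolding s_def t_def in_degree_def by simp
  with out have "wA * (out_degree G' (\<gamma> x) + s) + wB * (in_degree G' (\<gamma> x) + t) =
      wA * (out_degree G x + s * out_degree R v + t * out_degree R w)
        + wB * (in_degree G x + s * in_degree R v + t * in_degree R w)"
    by (simp only:)
  then have "weighted_degree wA wB G' (\<gamma> x) + s * wA + t * wB =
      wA * (out_degree G x + s * out_degree R v + t * out_degree R w)
        + wB * (in_degree G x + s * in_degree R v + t * in_degree R w)"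
    unfolding weighted_degree_def by (simp add: algebra_simps)
  also have "\<dots> = weighted_degree wA wB G x + s * (out_degree R v * wA + in_degree R v * wB)
        + t * (out_degree R w * wA + in_degree R w * wB)"
    unfolding weighted_degree_def by (simp add: algebra_simps)
  also have "\<dots> = weighted_degree wA wB G x + s * wA + t * wB"
    using bw unfolding balanced_weights_def by simp
  finally show ?thesis by simp
qed

lemma weighted_degree_new:
  "u \<in> interior R v w \<Longrightarrow> weighted_degree wA wB G' (\<alpha> u) = weighted_degree wA wB R u"
  using card_incident_new[of src u] card_incident_new[of tgt u]
  by (simp add: weighted_degree_def out_degree_def in_degree_def)

end

lemma replace_step_weighted_degrees:
  assumes "replace_step R v w G G'" "wf_graph G" "wf_graph R" "v \<noteq> w" "balanced_weights R v w wA wB"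
  shows "weighted_degree wA wB G ` verts G \<subseteq> weighted_degree wA wB G' ` verts G'"
    and "weighted_degree wA wB G' ` verts G' \<subseteq>
           weighted_degree wA wB G ` verts G \<union> weighted_degree wA wB R ` interior R v w"
proof -
  obtain \<epsilon> \<gamma> \<delta> \<alpha> \<beta> where r: "edge_replacement R v w G G' \<epsilon> \<gamma> \<delta> \<alpha> \<beta>"
    using replace_step_edge_replacement[OF assms(1-4)] .
  have "weighted_degree wA wB G' ` \<gamma> ` verts G = weighted_degree wA wB G ` verts G"
    unfolding image_image
    by (rule image_cong[OF refl], rule edge_replacement.weighted_degree_old[OF r assms(5)])
  moreover have "weighted_degree wA wB G' ` \<alpha> ` interior R v w = weighted_degree wA wB R ` interior R v w"
    unfolding image_image by (rule image_cong[OF refl], rule edge_replacement.weighted_degree_new[OF r])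
  ultimately have "weighted_degree wA wB G' ` verts G' =
      weighted_degree wA wB G ` verts G \<union> weighted_degree wA wB R ` interior R v w"
    unfolding edge_replacement.verts_eq[OF r] image_Un by simp
  then show "weighted_degree wA wB G ` verts G \<subseteq> weighted_degree wA wB G' ` verts G'"
    and "weighted_degree wA wB G' ` verts G' \<subseteq>
           weighted_degree wA wB G ` verts G \<union> weighted_degree wA wB R ` interior R v w"
    by blast+
qed

section \<open>Bounded degrees in the graph family\<close>

lemma expansion_wf:
  "expansion R v w G H \<Longrightarrow> wf_graph G \<Longrightarrow> wf_graph H"
  unfolding expansion_def by (induction rule: rtranclp_induct) (auto simp: replace_step_def)

lemma expansion_weighted_degrees:
  assumes "expansion R v w G H" "wf_graph G" "wf_graph R" "v \<noteq> w" "balanced_weights R v w wA wB"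
  shows "weighted_degree wA wB G ` verts G \<subseteq> weighted_degree wA wB H ` verts H"
    and "weighted_degree wA wB H ` verts H \<subseteq>
           weighted_degree wA wB G ` verts G \<union> weighted_degree wA wB R ` interior R v w"
  using assms(1) unfolding expansion_def
proof (induction rule: rtranclp_induct)
  case (step H H')
  have "wf_graph H" using step.hyps(1) assms(2) by (rule expansion_wf[unfolded expansion_def])
  note step_wd = replace_step_weighted_degrees[OF step.hyps(2) this assms(3-5)]
  { case 1 show ?case using step.IH(1) step_wd(1) by blast }
  { case 2 show ?case using step.IH(2) step_wd(2) by blast }
qed auto

lemma graph_iso_weighted_degrees:
  assumes "graph_iso H H'" "wf_graph H"
  shows "weighted_degree wA wB H ` verts H \<subseteq> weighted_degree wA wB H' ` verts H'"
proof -
  obtain f g where f: "bij_betw f (verts H) (verts H')" and g: "bij_betw g (edges H) (edges H')"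
    and ends: "\<forall>e\<in>edges H. src H' (g e) = f (src H e) \<and> tgt H' (g e) = f (tgt H e)"
    using assms(1) unfolding graph_iso_def by blast
  have card_incident: "card {e \<in> edges H'. h H' e = f x} = card {e \<in> edges H. h H e = x}"
    if h: "h \<in> {src, tgt}" and x: "x \<in> verts H" for h x
  proof -
    have "{e \<in> edges H. f (h H e) = f x} = {e \<in> edges H. h H e = x}"
      using h x f assms(2) unfolding bij_betw_def inj_on_def wf_graph_def by auto
    moreover have "{e \<in> edges H'. h H' e = f x} = g ` {e \<in> edges H. f (h H e) = f x}"
      using h ends g unfolding bij_betw_def by (auto simp flip: bij_betw_imp_surj_on[OF g])
    ultimately have "{e \<in> edges H'. h H' e = f x} = g ` {e \<in> edges H. h H e = x}"
      by simp
    then show ?thesis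
      using g by (auto simp: bij_betw_def intro!: card_image inj_on_subset[of g "edges H"])
  qed
  show ?thesis
  proof
    fix d assume "d \<in> weighted_degree wA wB H ` verts H"
    then obtain x where x: "x \<in> verts H" and d: "d = weighted_degree wA wB H x" by blast
    have "weighted_degree wA wB H' (f x) = d"
      using card_incident[of src x] card_incident[of tgt x] x
      unfolding d weighted_degree_def out_degree_def in_degree_def by simp
    then show "d \<in> weighted_degree wA wB H' ` verts H'"
      using f x by (auto simp: bij_betw_def)
  qed
qed

lemma expansion_of_edgeless:
  "expansion R v w G H \<Longrightarrow> edges G = {} \<Longrightarrow> H = G"
  unfolding expansion_def by (induction rule: rtranclp_induct) (auto simp: replace_step_def)

lemma expansion_verts_nonempty:
  "expansion R v w G H \<Longrightarrow> verts G \<noteq> {} \<Longrightarrow> verts H \<noteq> {}"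
  unfolding expansion_def by (induction rule: rtranclp_induct) (auto simp: replace_step_def)

lemma graph_family_edgeless:
  assumes "edges G0 = {}" "no_isolated G0" "G \<in> graph_family G0 R v w"
  shows "verts G = {}"
proof -
  obtain H H' where "expansion R v w G H" "expansion R v w G0 H'" "graph_iso H H'"
    using assms(3) unfolding graph_family_def by blast
  moreover have "verts G0 = {}" using assms(1,2) unfolding no_isolated_def by blast
  ultimately show ?thesis
    using expansion_of_edgeless[OF _ assms(1)] expansion_verts_nonempty
    unfolding graph_iso_def bij_betw_def by fastforce
qed

lemma graph_family_degree_bounded:
  assumes rs: "replacement_system G0 R v w" and ex: "expanding G0 R v w"
    and fb: "finite_branching G0 R v w"
  shows "\<exists>K. \<forall>G\<in>graph_family G0 R v w. \<forall>x\<in>verts G. degree G x \<le> K"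
proof (cases "edges G0 = {}")
  case True
  then show ?thesis using graph_family_edgeless ex unfolding expanding_def by blast
next
  case False
  have wf0: "wf_graph G0" and wfR: "wf_graph R" and vw: "v \<noteq> w"
    using rs by (auto simp: replacement_system_def)
  obtain wA wB where bw: "balanced_weights R v w wA wB"
    using finite_branching_balanced_weights[OF rs ex fb False] by blast
  let ?wd = "weighted_degree wA wB"
  define K where "K = Max (?wd G0 ` verts G0 \<union> ?wd R ` interior R v w)"
  have "finite (?wd G0 ` verts G0 \<union> ?wd R ` interior R v w)"
    using wf0 wfR by (simp add: wf_graph_def interior_def)
  then have K: "d \<le> K" if "d \<in> ?wd G0 ` verts G0 \<union> ?wd R ` interior R v w" for d
    using that unfolding K_def by simp
  have "degree G x \<le> K" if G: "G \<in> graph_family G0 R v w" and x: "x \<in> verts G" for G x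
  proof -
    obtain H H' where wfG: "wf_graph G" and GH: "expansion R v w G H"
      and G0H': "expansion R v w G0 H'" and iso: "graph_iso H H'"
      using G unfolding graph_family_def by blast
    have "?wd G x \<in> ?wd H' ` verts H'"
      using x expansion_weighted_degrees(1)[OF GH wfG wfR vw bw]
        graph_iso_weighted_degrees[OF iso expansion_wf[OF GH wfG]] by blast
    then have "?wd G x \<le> K"
      using K expansion_weighted_degrees(2)[OF G0H' wf0 wfR vw bw] by blast
    then show ?thesis using degree_le_weighted_degree[OF bw] le_trans by blast
  qed
  then show ?thesis by blast
qed

section \<open>Counting collapsible subgraphs\<close>

definition adjacency :: "graph \<Rightarrow> (nat \<times> nat) set" where
  "adjacency G = (\<lambda>e. (src G e, tgt G e)) ` edges G \<union> (\<lambda>e. (tgt G e, src G e)) ` edges G"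

lemma in_adjacency:
  "(x, y) \<in> adjacency G \<longleftrightarrow> (\<exists>e\<in>edges G. (src G e = x \<and> tgt G e = y) \<or> (src G e = y \<and> tgt G e = x))"
  by (auto simp: adjacency_def)

lemma finite_adjacency: "finite (edges G) \<Longrightarrow> finite (adjacency G)"
  by (simp add: adjacency_def)

lemma connected_graph_adjacency:
  "connected_graph G \<Longrightarrow> x \<in> verts G \<Longrightarrow> y \<in> verts G \<Longrightarrow> (x, y) \<in> (adjacency G)\<^sup>*"
  unfolding connected_graph_def Enum.rtranclp_rtrancl_eq in_adjacency[symmetric] by simp

definition graph_ball :: "graph \<Rightarrow> nat \<Rightarrow> nat set \<Rightarrow> nat set" where
  "graph_ball G k A = ((\<lambda>B. B \<union> adjacency G `` B) ^^ k) A"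

lemma graph_ball_0 [simp]: "graph_ball G 0 A = A"
  by (simp add: graph_ball_def)

lemma graph_ball_Suc: "graph_ball G (Suc k) A = graph_ball G k A \<union> adjacency G `` graph_ball G k A"
  by (simp add: graph_ball_def)

lemma graph_ball_mono: "k \<le> k' \<Longrightarrow> graph_ball G k A \<subseteq> graph_ball G k' A"
  by (induction k' rule: dec_induct) (auto simp: graph_ball_Suc)

lemma graph_ball_subset_verts:
  "wf_graph G \<Longrightarrow> A \<subseteq> verts G \<Longrightarrow> graph_ball G k A \<subseteq> verts G"
  by (induction k) (auto simp: graph_ball_Suc in_adjacency wf_graph_def)

lemma card_adjacency_Image:
  assumes "wf_graph G" "A \<subseteq> verts G" "\<forall>x\<in>verts G. degree G x \<le> K"
  shows "finite (adjacency G `` A) \<and> card (adjacency G `` A) \<le> K * card A"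
proof -
  have fin: "finite (edges G)" "finite A" using assms(1,2) finite_subset by (auto simp: wf_graph_def)
  have one: "card (adjacency G `` {x}) \<le> K" if "x \<in> A" for x
  proof -
    have "adjacency G `` {x} = tgt G ` {e \<in> edges G. src G e = x} \<union> src G ` {e \<in> edges G. tgt G e = x}"
      by (auto simp: in_adjacency)
    then have "card (adjacency G `` {x}) \<le>
        card (tgt G ` {e \<in> edges G. src G e = x}) + card (src G ` {e \<in> edges G. tgt G e = x})"
      using card_Un_le by simp
    also have "\<dots> \<le> out_degree G x + in_degree G x"
      unfolding out_degree_def in_degree_def using fin(1) by (intro add_mono card_image_le) auto
    finally have "card (adjacency G `` {x}) \<le> out_degree G x + in_degree G x" .
    moreover have "degree G x \<le> K" using assms(2,3) that by blast
    ultimately show ?thesis by (simp add: degree_eq_out_in)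
  qed
  have "card (adjacency G `` A) \<le> (\<Sum>x\<in>A. card (adjacency G `` {x}))"
    unfolding Image_eq_UN[of _ A] by (rule card_UN_le[OF fin(2)])
  also have "\<dots> \<le> K * card A"
    using sum_mono[of A "\<lambda>x. card (adjacency G `` {x})" "\<lambda>_. K"] one by (simp add: mult.commute)
  finally show ?thesis using finite_adjacency[OF fin(1)] by simp
qed

lemma card_graph_ball:
  assumes "wf_graph G" "A \<subseteq> verts G" "\<forall>x\<in>verts G. degree G x \<le> K"
  shows "finite (graph_ball G k A) \<and> card (graph_ball G k A) \<le> (K + 1) ^ k * card A"
proof (induction k)
  case 0
  then show ?case using assms(1,2) finite_subset by (auto simp: wf_graph_def)
next
  case (Suc k)
  have "finite (adjacency G `` graph_ball G k A) \<and> card (adjacency G `` graph_ball G k A) \<le> K * card (graph_ball G k A)"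
    using card_adjacency_Image[OF assms(1) graph_ball_subset_verts[OF assms(1,2)] assms(3)] .
  then have "finite (graph_ball G (Suc k) A) \<and> card (graph_ball G (Suc k) A) \<le> (K + 1) * card (graph_ball G k A)"
    using Suc.IH unfolding graph_ball_Suc by (auto intro: le_trans[OF card_Un_le])
  moreover have "(K + 1) * card (graph_ball G k A) \<le> (K + 1) ^ Suc k * card A"
    using Suc.IH by (simp only: power_Suc mult.assoc mult_le_mono2)
  ultimately show ?case by (meson le_trans)
qed

lemma char_map_walk:
  assumes "char_map R v w G f g" "(a, u) \<in> adjacency R ^^ k" "f a \<in> B"
  shows "f u \<in> graph_ball G k B"
  using assms(2)
proof (induction k arbitrary: u)
  case 0
  then show ?case using assms(3) by simp
next
  case (Suc k)
  from Suc.prems obtain y where y: "(a, y) \<in> adjacency R ^^ k" "(y, u) \<in> adjacency R"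
    by (rule relpow_Suc_E)
  then obtain r where r: "r \<in> edges R" "(src R r = y \<and> tgt R r = u) \<or> (src R r = u \<and> tgt R r = y)"
    by (auto simp: in_adjacency)
  moreover have "g r \<in> edges G" "src G (g r) = f (src R r)" "tgt G (g r) = f (tgt R r)"
    using assms(1) r(1) unfolding char_map_def by auto
  ultimately have "(f y, f u) \<in> adjacency G"
    unfolding in_adjacency by (intro bexI[of _ "g r"]) auto
  then show ?case using Suc.IH[OF y(1)] unfolding graph_ball_Suc by blast
qed

lemma char_maps_sharing_edge_close:
  assumes wfR: "wf_graph R" and conn: "connected_graph R"
    and cm: "char_map R v w G f g" and cm': "char_map R v w G f' g'"
    and share: "g ` edges R \<inter> g' ` edges R \<noteq> {}"
  shows "f' ` verts R \<subseteq> graph_ball G (card (adjacency R)) (f ` verts R)"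
proof
  fix y assume "y \<in> f' ` verts R"
  then obtain u where u: "u \<in> verts R" "y = f' u" by blast
  obtain r r' where r: "r \<in> edges R" "r' \<in> edges R" "g r = g' r'" using share by blast
  define a where "a = src R r'"
  have a: "a \<in> verts R" using wfR r(2) unfolding a_def wf_graph_def by auto
  have "f' a = f (src R r)"
    using cm cm' r unfolding a_def char_map_def by metis
  then have fa: "f' a \<in> f ` verts R" using wfR r(1) unfolding wf_graph_def by auto
  have "finite (adjacency R)" using wfR by (simp add: finite_adjacency wf_graph_def)
  then obtain k where "k \<le> card (adjacency R)" "(a, u) \<in> adjacency R ^^ k"
    using connected_graph_adjacency[OF conn a u(1)] rtrancl_finite_eq_relpow by blast
  then show "y \<in> graph_ball G (card (adjacency R)) (f ` verts R)"
    using char_map_walk[OF cm' _ fa] graph_ball_mono u(2) by blast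
qed

lemma card_out_edges:
  assumes "wf_graph G" "Y \<subseteq> verts G" "\<forall>x\<in>verts G. degree G x \<le> K"
  shows "finite {e \<in> edges G. src G e \<in> Y} \<and> card {e \<in> edges G. src G e \<in> Y} \<le> K * card Y"
proof -
  have fin: "finite (edges G)" "finite Y" using assms(1,2) finite_subset by (auto simp: wf_graph_def)
  have "card {e \<in> edges G. src G e \<in> Y} \<le> (\<Sum>y\<in>Y. card {e \<in> edges G. src G e = y})"
    using card_UN_le[OF fin(2), of "\<lambda>y. {e \<in> edges G. src G e = y}"]
    by (simp add: Collect_bex_eq[symmetric] bex_simps)
  also have "\<dots> \<le> K * card Y"
    using sum_mono[of Y "\<lambda>y. card {e \<in> edges G. src G e = y}" "\<lambda>_. K"] assms(2,3)
    by (fastforce simp: degree_eq_out_in out_degree_def mult.commute)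
  finally show ?thesis using fin(1) by simp
qed

lemma collapsible_sharing_edge_choices:
  assumes wfR: "wf_graph R" and conn: "connected_graph R" and cm: "char_map R v w G f g"
  defines "Y \<equiv> graph_ball G (card (adjacency R)) (f ` verts R)"
  shows "{S'. collapsible R v w G S' \<and> g ` edges R \<inter> snd S' \<noteq> {}} \<subseteq>
    (\<lambda>(\<phi>, \<psi>). (\<phi> ` verts R, \<psi> ` edges R)) `
      ((\<Pi>\<^sub>E u\<in>verts R. Y) \<times> (\<Pi>\<^sub>E r\<in>edges R. {e \<in> edges G. src G e \<in> Y}))"
proof
  fix S' assume S'T: "S' \<in> {S'. collapsible R v w G S' \<and> g ` edges R \<inter> snd S' \<noteq> {}}"
  then obtain f' g' where cm': "char_map R v w G f' g'" and S': "S' = (f' ` verts R, g' ` edges R)"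
    unfolding collapsible_def by blast
  have share: "g ` edges R \<inter> g' ` edges R \<noteq> {}" using S'T unfolding S' by simp
  have fY: "f' ` verts R \<subseteq> Y"
    unfolding Y_def by (rule char_maps_sharing_edge_close[OF wfR conn cm cm' share])
  then have "g' ` edges R \<subseteq> {e \<in> edges G. src G e \<in> Y}"
    using cm' wfR unfolding char_map_def wf_graph_def by fastforce
  with fY show "S' \<in> (\<lambda>(\<phi>, \<psi>). (\<phi> ` verts R, \<psi> ` edges R)) `
      ((\<Pi>\<^sub>E u\<in>verts R. Y) \<times> (\<Pi>\<^sub>E r\<in>edges R. {e \<in> edges G. src G e \<in> Y}))"
    unfolding S' by (intro rev_image_eqI[of "(restrict f' (verts R), restrict g' (edges R))"]) auto
qed

lemma card_collapsible_sharing_edge: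
  assumes wfG: "wf_graph G" and wfR: "wf_graph R" and conn: "connected_graph R"
    and deg: "\<forall>x\<in>verts G. degree G x \<le> K" and S: "collapsible R v w G S"
  defines "N \<equiv> (K + 1) ^ card (adjacency R) * card (verts R)"
  shows "finite {S'. collapsible R v w G S' \<and> S' \<noteq> S \<and> snd S \<inter> snd S' \<noteq> {}} \<and>
    card {S'. collapsible R v w G S' \<and> S' \<noteq> S \<and> snd S \<inter> snd S' \<noteq> {}}
      \<le> N ^ card (verts R) * (K * N) ^ card (edges R)"
proof -
  obtain f g where cm: "char_map R v w G f g" and S_eq: "S = (f ` verts R, g ` edges R)"
    using S unfolding collapsible_def by blast
  have fin: "finite (verts R)" "finite (edges R)" using wfR by (auto simp: wf_graph_def)
  have base: "f ` verts R \<subseteq> verts G" using cm unfolding char_map_def by blast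
  define Y where "Y = graph_ball G (card (adjacency R)) (f ` verts R)"
  define Z where "Z = {e \<in> edges G. src G e \<in> Y}"
  have Y: "finite Y" "card Y \<le> N" "Y \<subseteq> verts G"
    using card_graph_ball[OF wfG base deg, of "card (adjacency R)"] card_image_le[OF fin(1), of f]
      graph_ball_subset_verts[OF wfG base]
    unfolding Y_def N_def by (auto intro: le_trans)
  have Z: "finite Z" "card Z \<le> K * N"
    using card_out_edges[OF wfG Y(3) deg] Y(2) unfolding Z_def by (meson le_trans mult_le_mono2)+
  define P where "P = (\<Pi>\<^sub>E u\<in>verts R. Y) \<times> (\<Pi>\<^sub>E r\<in>edges R. Z)"
  define F where "F = (\<lambda>(\<phi>::nat \<Rightarrow> nat, \<psi>::nat \<Rightarrow> nat). (\<phi> ` verts R, \<psi> ` edges R))"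
  have "{S'. collapsible R v w G S' \<and> S' \<noteq> S \<and> snd S \<inter> snd S' \<noteq> {}} \<subseteq>
      {S'. collapsible R v w G S' \<and> g ` edges R \<inter> snd S' \<noteq> {}}"
    unfolding S_eq by auto
  then have sub: "{S'. collapsible R v w G S' \<and> S' \<noteq> S \<and> snd S \<inter> snd S' \<noteq> {}} \<subseteq> F ` P"
    using collapsible_sharing_edge_choices[OF wfR conn cm] unfolding P_def F_def Y_def Z_def
    by (rule order_trans)
  have P: "finite P" "card P = card Y ^ card (verts R) * card Z ^ card (edges R)"
    unfolding P_def using fin Y(1) Z(1)
    by (auto simp: card_cartesian_product card_PiE intro!: finite_PiE)
  have "card Y ^ card (verts R) * card Z ^ card (edges R) \<le> N ^ card (verts R) * (K * N) ^ card (edges R)"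
    using Y(2) Z(2) by (intro mult_le_mono power_mono) auto
  then have "card (F ` P) \<le> N ^ card (verts R) * (K * N) ^ card (edges R)"
    using card_image_le[OF P(1), of F] P(2) by linarith
  then show ?thesis
    using finite_subset[OF sub finite_imageI[OF P(1)]] card_mono[OF finite_imageI[OF P(1)] sub]
    by linarith
qed

theorem lemma4p13:
  fixes G0 R :: graph and v w :: nat
  assumes "replacement_system G0 R v w"
    and "expanding G0 R v w"
    and "finite_branching G0 R v w"
    and "connected_graph R"
  shows "\<exists>i::nat. \<forall>G \<in> graph_family G0 R v w. \<forall>S. collapsible R v w G S \<longrightarrow>
           finite {S'. collapsible R v w G S' \<and> S' \<noteq> S \<and> snd S \<inter> snd S' \<noteq> {}} \<and>
           card {S'. collapsible R v w G S' \<and> S' \<noteq> S \<and> snd S \<inter> snd S' \<noteq> {}} \<le> i"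
proof -
  obtain K where K: "\<forall>G\<in>graph_family G0 R v w. \<forall>x\<in>verts G. degree G x \<le> K"
    using graph_family_degree_bounded[OF assms(1-3)] by blast
  have wfR: "wf_graph R" using assms(1) by (simp add: replacement_system_def)
  let ?N = "(K + 1) ^ card (adjacency R) * card (verts R)"
  show ?thesis
  proof (intro exI ballI allI impI)
    fix G S assume G: "G \<in> graph_family G0 R v w" and S: "collapsible R v w G S"
    have "wf_graph G" using G by (simp add: graph_family_def)
    then show "finite {S'. collapsible R v w G S' \<and> S' \<noteq> S \<and> snd S \<inter> snd S' \<noteq> {}} \<and>
        card {S'. collapsible R v w G S' \<and> S' \<noteq> S \<and> snd S \<inter> snd S' \<noteq> {}}
          \<le> ?N ^ card (verts R) * (K * ?N) ^ card (edges R)"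
      using card_collapsible_sharing_edge[OF _ wfR assms(4) _ S] K G by blast
  qed
qed

end
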